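(* Let $n\ge 7$ and let $G\in B^{++}_n$. (1) $\mathrm{irr}_t(G)\ge 2n-4$. Equality holds if and only if the degree sequence of $G$ is $(3,3,2,\ldots,2)$, i.e. two vertices of degree $3$ and $n-2$ vertices of degree $2$. (2) If the degree sequence of $G$ is not $(3,3,2,\ldots,2)$, then $\mathrm{irr}_t(G)\ge 4n-10$. Equality holds if and only if the degree sequence of $G$ is $(3,3,3,2,\ldots,2,1)$, i.e. three vertices of degree $3$, $n-4$ vertices of degree $2$ and one vertex of degree $1$.
   Context: A bicyclic graph is a simple connected graph whose number of edges equals its number of vertices plus one. For a graph $G=(V,E)$ and $w\in V$, $d_G(w)$ is the degree of $w$. The total irregularity is $\mathrm{irr}_t(G)=\frac12\sum_{x,y\in V}|d_G(x)-d_G(y)|$, where the sum runs over all ordered pairs of vertices. Degree sequences are listed in nonincreasing order. For $p,q\ge 3$ and $l\ge 1$, the $\infty$-graph $\infty(p,q,l)$ is obtained from two vertex-disjoint cycles $C_p$ and $C_q$ by joining a vertex of $C_p$ and a vertex of $C_q$ with a path having $l$ vertices (i.e. length $l-1$). $B^{++}_n$ denotes the set of bicyclic graphs on $n$ vertices obtained from some $\infty(p,q,l)$ with $l\ge 2$ by attaching trees. Equivalently, these are the bicyclic graphs on $n$ vertices whose two cycles are vertex-disjoint. *)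

theory Defs
  imports Complex_Main "HOL-Library.Multiset"
begin

definition simple_graph :: "'a set \<Rightarrow> 'a set set \<Rightarrow> bool" where
  "simple_graph V E \<longleftrightarrow> finite V \<and> (\<forall>e\<in>E. \<exists>u v. e = {u, v} \<and> u \<in> V \<and> v \<in> V \<and> u \<noteq> v)"

definition adj :: "'a set set \<Rightarrow> 'a \<Rightarrow> 'a \<Rightarrow> bool" where
  "adj E u v \<longleftrightarrow> {u, v} \<in> E"

definition connected_graph :: "'a set \<Rightarrow> 'a set set \<Rightarrow> bool" where
  "connected_graph V E \<longleftrightarrow> V \<noteq> {} \<and> (\<forall>u\<in>V. \<forall>v\<in>V. (adj E)\<^sup>*\<^sup>* u v)"

definition deg :: "'a set set \<Rightarrow> 'a \<Rightarrow> nat" where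
  "deg E w = card {e \<in> E. w \<in> e}"

definition bicyclic :: "'a set \<Rightarrow> 'a set set \<Rightarrow> bool" where
  "bicyclic V E \<longleftrightarrow> simple_graph V E \<and> connected_graph V E \<and> card E = card V + 1"

definition is_cycle :: "'a set \<Rightarrow> 'a set set \<Rightarrow> 'a list \<Rightarrow> bool" where
  "is_cycle V E c \<longleftrightarrow> length c \<ge> 3 \<and> distinct c \<and> set c \<subseteq> V \<and>
     (\<forall>i < length c - 1. adj E (c ! i) (c ! Suc i)) \<and> adj E (last c) (hd c)"

definition in_Bpp :: "nat \<Rightarrow> 'a set \<Rightarrow> 'a set set \<Rightarrow> bool" where
  "in_Bpp n V E \<longleftrightarrow> bicyclic V E \<and> card V = n \<and>
     (\<exists>c1 c2. is_cycle V E c1 \<and> is_cycle V E c2 \<and> set c1 \<inter> set c2 = {})"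

definition irr_t :: "'a set \<Rightarrow> 'a set set \<Rightarrow> real" where
  "irr_t V E = (\<Sum>x\<in>V. \<Sum>y\<in>V. \<bar>real (deg E x) - real (deg E y)\<bar>) / 2"

definition degree_sequence :: "'a set \<Rightarrow> 'a set set \<Rightarrow> nat list" where
  "degree_sequence V E = rev (sorted_list_of_multiset (image_mset (deg E) (mset_set V)))"

end

theory Submission
  imports Defs
begin

(*
  The theorem only depends on the degree function d = deg E of G, which
  satisfies three facts: every degree is at least 1 (G is connected with n >= 2 vertices),
  the degrees sum to 2n + 2 (handshake lemma, |E| = n + 1), and d is not the degree function
  (4,2,...,2): a graph in B++ has a cycle avoiding the degree-4 vertex, and a cycle made
  of degree-2 vertices is a whole connected component.

  Split V into
  leaves (degree 1, l = nl of them), vertices of degree 2 (m = n2 of them) and high vertices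
  (degree >= 3, h = nh of them).  The excesses d v - 2 of the high vertices sum to l + 2, so
  h <= l + 2, and the doubled total irregularity equals  Q + 4m(1 + l) + 2l(2 + l + h)
  with Q >= 0 the contribution of pairs of high vertices.  For l = 0 this forces the
  sequence (3,3,2,...,2) with value 2n - 4; for l = 1, h = 3 the sequence (3,3,3,2,...,2,1)
  with value 4n - 10; in all remaining cases the value exceeds 4n - 10.
*)

section \<open>Graph-theoretic facts about bicyclic graphs\<close>

lemma simple_graph_edges:
  assumes "simple_graph V E"
  shows "finite E" "E \<subseteq> Pow V" "\<And>e. e \<in> E \<Longrightarrow> card e = 2"
proof -
  show sub: "E \<subseteq> Pow V" using assms by (auto simp: simple_graph_def)
  show "finite E" using assms sub by (meson finite_Pow_iff finite_subset simple_graph_def)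
  fix e assume "e \<in> E"
  then obtain u v where "e = {u, v}" "u \<noteq> v" using assms unfolding simple_graph_def by blast
  then show "card e = 2" by simp
qed

text \<open>Handshake lemma: every edge is counted once at each of its two endpoints.\<close>
lemma handshake:
  assumes sg: "simple_graph V E"
  shows "(\<Sum>v\<in>V. deg E v) = 2 * card E"
proof -
  have fV: "finite V" using sg by (simp add: simple_graph_def)
  note edges = simple_graph_edges[OF sg]
  have "(\<Sum>v\<in>V. deg E v) = (\<Sum>v\<in>V. \<Sum>e\<in>E. if v \<in> e then (1::nat) else 0)"
    unfolding deg_def using edges(1) by (simp add: sum.inter_filter[symmetric])
  also have "\<dots> = (\<Sum>e\<in>E. \<Sum>v\<in>V. if v \<in> e then (1::nat) else 0)" by (rule sum.swap)
  also have "\<dots> = (\<Sum>e\<in>E. 2)"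
  proof (rule sum.cong)
    fix e assume e: "e \<in> E"
    have "{v\<in>V. v \<in> e} = e" using edges(2) e by auto
    then have "(\<Sum>v\<in>V. if v \<in> e then (1::nat) else 0) = card e"
      using fV by (simp add: sum.inter_filter[symmetric])
    then show "(\<Sum>v\<in>V. if v \<in> e then (1::nat) else 0) = 2" using edges(3)[OF e] by simp
  qed simp
  finally show ?thesis by simp
qed

lemma connected_deg_pos:
  assumes sg: "simple_graph V E" and con: "connected_graph V E"
    and two: "card V \<ge> 2" and v: "v \<in> V"
  shows "deg E v \<ge> 1"
proof -
  have "\<not> V \<subseteq> {v}"
    using two card_mono[of "{v}" V] by auto
  then obtain w where w: "w \<in> V" "w \<noteq> v" by blast
  have "(adj E)\<^sup>*\<^sup>* v w" using con v w(1) by (auto simp: connected_graph_def)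
  then obtain x where "adj E v x" using w(2) by (cases rule: converse_rtranclpE) auto
  then have "{v, x} \<in> {e\<in>E. v \<in> e}" by (auto simp: adj_def)
  moreover have "finite {e\<in>E. v \<in> e}" using simple_graph_edges(1)[OF sg] by simp
  ultimately have "card {e\<in>E. v \<in> e} > 0" by (auto simp: card_gt_0_iff)
  then show ?thesis unfolding deg_def by simp
qed

lemma cycle_adj:
  assumes cyc: "is_cycle V E c" and i: "i < length c"
  shows "adj E (c ! i) (c ! (Suc i mod length c))"
proof (cases "Suc i < length c")
  case True
  then show ?thesis using assms by (auto simp: is_cycle_def)
next
  case False
  then have last_idx: "Suc i = length c" using i by simp
  have ne: "c \<noteq> []" using i by auto
  have "i = length c - 1" using last_idx by simp
  then have "c ! i = last c" using ne by (simp add: last_conv_nth)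
  moreover have "c ! (Suc i mod length c) = hd c" using last_idx ne by (simp add: hd_conv_nth)
  ultimately show ?thesis using cyc by (auto simp: is_cycle_def)
qed

lemma cyclic_indices:
  assumes "3 \<le> (L::nat)" "i < L"
  shows "(i + L - 1) mod L < L \<and> Suc ((i + L - 1) mod L) mod L = i \<and> Suc i mod L \<noteq> i
         \<and> (i + L - 1) mod L \<noteq> i \<and> Suc i mod L \<noteq> (i + L - 1) mod L"
proof (cases "i = 0")
  case True
  have pred: "(i + L - 1) mod L = L - 1" using True assms by simp
  have wrap: "Suc (L - 1) mod L = 0" using assms by simp
  have succ: "Suc i mod L = 1" using True assms by simp
  show ?thesis unfolding pred wrap succ using True assms by simp
next
  case False
  have pred: "(i + L - 1) mod L = i - 1"
  proof -
    have "i + L - 1 = (i - 1) + L" using False by simp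
    then have "(i + L - 1) mod L = (i - 1) mod L" by (simp only: mod_add_self2)
    also have "\<dots> = i - 1" using assms by (intro mod_less) linarith
    finally show ?thesis .
  qed
  have pred_succ: "Suc (i - 1) mod L = i" using False assms by simp
  show ?thesis
  proof (cases "Suc i < L")
    case True
    then have succ: "Suc i mod L = Suc i" by simp
    show ?thesis unfolding pred pred_succ succ using \<open>i \<noteq> 0\<close> True assms by arith
  next
    case False
    then have succ: "Suc i mod L = 0" using assms by (metis Suc_lessI mod_self)
    show ?thesis unfolding pred pred_succ succ using \<open>i \<noteq> 0\<close> False assms by arith
  qed
qed

text \<open>A vertex of degree 2 lying on a cycle has both of its neighbours on that cycle:
  its two incident edges are the two cycle edges through it.\<close>
lemma cycle_closed:
  assumes sg: "simple_graph V E" and cyc: "is_cycle V E c" and u: "u \<in> set c"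
    and du: "deg E u = 2" and ux: "adj E u x"
  shows "x \<in> set c"
proof -
  let ?L = "length c"
  obtain i where i: "i < ?L" "c ! i = u" using u by (auto simp: in_set_conv_nth)
  have L3: "?L \<ge> 3" and dist: "distinct c" using cyc by (auto simp: is_cycle_def)
  define j where "j = (i + ?L - 1) mod ?L"
  note idx = cyclic_indices[OF L3 i(1), folded j_def]
  define s where "s = c ! (Suc i mod ?L)"
  define p where "p = c ! j"
  have "0 < ?L" using L3 by linarith
  then have succ_idx: "Suc i mod ?L < ?L" by (rule mod_less_divisor)
  have edges: "{u, s} \<in> E" "{p, u} \<in> E"
    using cycle_adj[OF cyc i(1)] cycle_adj[OF cyc, of j] idx i(2)
    by (simp_all add: adj_def s_def p_def)
  have "s \<noteq> p" "s \<noteq> u" unfolding s_def p_def i(2)[symmetric]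
    using dist idx succ_idx i(1) by (simp_all add: nth_eq_iff_index_eq)
  then have two: "card {{u, s}, {p, u}} = 2" by (auto simp: doubleton_eq_iff)
  have sub: "{{u, s}, {p, u}} \<subseteq> {e\<in>E. u \<in> e}" using edges by auto
  have fin: "finite {e\<in>E. u \<in> e}" using simple_graph_edges(1)[OF sg] by simp
  have incident: "{{u, s}, {p, u}} = {e\<in>E. u \<in> e}"
    using card_subset_eq[OF fin sub] two du unfolding deg_def by simp
  have "{u, x} \<in> {e\<in>E. u \<in> e}" using ux by (simp add: adj_def)
  then have "{u, x} = {u, s} \<or> {u, x} = {p, u}" unfolding incident[symmetric] by simp
  then have "x \<in> {u, s, p}" by (metis insertCI insert_commute)
  moreover have "s \<in> set c" "p \<in> set c" using idx succ_idx by (auto simp: s_def p_def)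
  ultimately show ?thesis using u by auto
qed

text \<open>A graph in B++ never has degree sequence (4,2,...,2): one of the two disjoint cycles
  avoids the degree-4 vertex, and since all of its vertices have degree 2 nothing outside it
  is reachable from it, contradicting connectivity.\<close>
lemma Bpp_not_4_2:
  assumes B: "in_Bpp n V E" and v: "v \<in> V" "deg E v = 4"
    and others: "\<forall>w\<in>V-{v}. deg E w = 2"
  shows False
proof -
  from B obtain c1 c2 where sg: "simple_graph V E" and con: "connected_graph V E"
    and c: "is_cycle V E c1" "is_cycle V E c2" "set c1 \<inter> set c2 = {}"
    unfolding in_Bpp_def bicyclic_def by blast
  obtain c where cyc: "is_cycle V E c" and vc: "v \<notin> set c" using c by blast
  have ne: "c \<noteq> []" and sub: "set c \<subseteq> V" using cyc by (auto simp: is_cycle_def)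
  have closed: "y \<in> set c" if "(adj E)\<^sup>*\<^sup>* x y" "x \<in> set c" for x y
    using that
  proof (induction rule: rtranclp_induct)
    case (step y z)
    then have "deg E y = 2" using others sub vc by auto
    then show ?case using cycle_closed[OF sg cyc] step by blast
  qed
  have "(adj E)\<^sup>*\<^sup>* (hd c) v" using con v(1) sub hd_in_set[OF ne] by (auto simp: connected_graph_def)
  then show False using closed vc ne by (meson hd_in_set)
qed

lemma count_image_mset_set:
  "finite V \<Longrightarrow> count (image_mset d (mset_set V)) k = card {v\<in>V. d v = k}"
  by (smt (verit, del_insts) Collect_cong count_conv_size_mset
    filter_mset_image_mset filter_mset_mset_set size_image_mset size_mset_set)

lemma rev_sorted_list_of_multiset_eq_iff:
  assumes "sorted (rev xs)"
  shows "rev (sorted_list_of_multiset M) = xs \<longleftrightarrow> M = mset xs"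
proof
  assume "rev (sorted_list_of_multiset M) = xs"
  then show "M = mset xs" by auto
next
  assume "M = mset xs"
  then have "sorted_list_of_multiset M = sort xs" by simp
  also have "\<dots> = rev xs" using assms by (intro properties_for_sort) auto
  finally show "rev (sorted_list_of_multiset M) = xs" by simp
qed

text \<open>The arithmetic core of the strict bound: with l >= 1 leaves, h <= l + 2 high vertices
  and m vertices of degree 2 (so n = l + h + m), the lower bound 4m(1 + l) + 2l(2 + l + h)
  for the doubled irregularity exceeds 8n - 20 except for l = 1, h = 3.\<close>
lemma key_inequality:
  fixes l h m :: nat
  assumes "l \<ge> 1" "h \<le> l + 2" "\<not> (l = 1 \<and> h = 3)"
  shows "8 * (l + h + m) < 4 * m * (1 + l) + 2 * l * (2 + l + h) + 20"
proof -
  have m: "4 * m * (1 + l) \<ge> 8 * m" using assms(1) by simp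
  consider "l = 1" | "l = 2" | "l = 3" | "l \<ge> 4" using assms(1) by linarith
  then show ?thesis
  proof cases
    case 4
    then have "2 * l * (2 + l + h) \<ge> 8 * (2 + l + h)" by (intro mult_right_mono) auto
    then have "8 * m + 8 * (2 + l + h) \<le> 4 * m * (1 + l) + 2 * l * (2 + l + h)"
      using m by (rule add_mono[rotated])
    then show ?thesis by simp
  qed (use assms m in simp_all)
qed

section \<open>Degree functions of connected bicyclic graphs\<close>

text \<open>The combinatorial data left after forgetting the graph: a positive function d on a
  finite set V of n vertices whose values sum to 2n + 2.\<close>
locale bicyclic_degrees =
  fixes V :: "'a set" and d :: "'a \<Rightarrow> nat"
  assumes finite_V: "finite V"
    and deg_pos: "\<And>v. v \<in> V \<Longrightarrow> d v \<ge> 1"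
    and deg_sum: "(\<Sum>v\<in>V. d v) = 2 * card V + 2"
begin

definition leaves :: "'a set" where "leaves = {v\<in>V. d v = 1}"
definition twos :: "'a set" where "twos = {v\<in>V. d v = 2}"
definition highs :: "'a set" where "highs = {v\<in>V. d v \<ge> 3}"

definition nl :: nat where "nl = card leaves"
definition n2 :: nat where "n2 = card twos"
definition nh :: nat where "nh = card highs"

definition exc :: "'a \<Rightarrow> real" where "exc v = real (d v) - 2"
definition degrees :: "nat multiset" where "degrees = image_mset d (mset_set V)"

definition irr_sum :: real where
  "irr_sum = (\<Sum>x\<in>V. \<Sum>y\<in>V. \<bar>real (d x) - real (d y)\<bar>)"
definition high_part :: real where
  "high_part = (\<Sum>x\<in>highs. \<Sum>y\<in>highs. \<bar>real (d x) - real (d y)\<bar>)"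

lemma finite_classes: "finite leaves" "finite twos" "finite highs"
  using finite_V by (auto simp: leaves_def twos_def highs_def)

lemma sum_classes:
  "(\<Sum>x\<in>V. g x) = (\<Sum>x\<in>highs. g x) + (\<Sum>x\<in>twos. g x) + (\<Sum>x\<in>leaves. g x)"
proof -
  have "d v = 1 \<or> d v = 2 \<or> d v \<ge> 3" if "v \<in> V" for v
    using deg_pos[OF that] by linarith
  then have V: "V = (highs \<union> twos) \<union> leaves"
    by (auto simp: highs_def twos_def leaves_def)
  have disj: "highs \<inter> twos = {}" "(highs \<union> twos) \<inter> leaves = {}"
    by (auto simp: highs_def twos_def leaves_def)
  have "(\<Sum>x\<in>V. g x) = (\<Sum>x\<in>(highs \<union> twos) \<union> leaves. g x)"
    using V by (rule arg_cong)
  also have "\<dots> = (\<Sum>x\<in>highs \<union> twos. g x) + (\<Sum>x\<in>leaves. g x)"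
    using finite_classes disj by (intro sum.union_disjoint) auto
  also have "(\<Sum>x\<in>highs \<union> twos. g x) = (\<Sum>x\<in>highs. g x) + (\<Sum>x\<in>twos. g x)"
    using finite_classes disj by (intro sum.union_disjoint) auto
  finally show ?thesis .
qed

lemma card_V: "card V = nl + n2 + nh"
  using sum_classes[of "\<lambda>_. 1::nat"] by (simp add: nl_def n2_def nh_def)

lemma count_degrees: "count degrees k = card {v\<in>V. d v = k}"
  unfolding degrees_def using finite_V by (rule count_image_mset_set)

lemma size_degrees: "size degrees = card V"
  by (simp add: degrees_def)

lemma count_degrees_1: "count degrees 1 = nl"
  by (simp add: count_degrees nl_def leaves_def)

lemma count_degrees_2: "count degrees 2 = n2"
  by (simp add: count_degrees n2_def twos_def)

text \<open>The total excess is 2 and the leaves contribute -1 each, so the high vertices carry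
  excess exactly nl + 2.\<close>
lemma excess_highs: "(\<Sum>v\<in>highs. exc v) = 2 + real nl"
proof -
  have "(\<Sum>v\<in>V. exc v) = real (\<Sum>v\<in>V. d v) - 2 * real (card V)"
    by (simp add: exc_def sum_subtractf)
  then have total: "(\<Sum>v\<in>V. exc v) = 2" using deg_sum by simp
  have "(\<Sum>v\<in>twos. exc v) = 0" by (simp add: twos_def exc_def)
  moreover have "(\<Sum>v\<in>leaves. exc v) = - real nl"
    by (simp add: leaves_def exc_def nl_def)
  ultimately show ?thesis using total sum_classes[of exc] by linarith
qed

lemma exc_highs_ge_1: "v \<in> highs \<Longrightarrow> exc v \<ge> 1"
  by (auto simp: highs_def exc_def)

text \<open>Each high vertex has excess at least 1, hence at most nl + 2 of them; in the extremal
  case all of them have degree exactly 3.\<close>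
lemma nh_le: "nh \<le> nl + 2"
proof -
  have "real nh = (\<Sum>v\<in>highs. 1)" by (simp add: nh_def)
  also have "\<dots> \<le> (\<Sum>v\<in>highs. exc v)" using exc_highs_ge_1 by (intro sum_mono) auto
  finally show ?thesis using excess_highs by linarith
qed

lemma highs_deg_3:
  assumes "nh = nl + 2" and "v \<in> highs"
  shows "d v = 3"
proof -
  have "(\<Sum>v\<in>highs. exc v - 1) = (\<Sum>v\<in>highs. exc v) - real nh"
    by (simp add: sum_subtractf nh_def)
  then have zero: "(\<Sum>v\<in>highs. exc v - 1) = 0" using excess_highs assms(1) by simp
  have nonneg: "\<And>v. v \<in> highs \<Longrightarrow> 0 \<le> exc v - 1" using exc_highs_ge_1 by simp
  have "\<forall>v\<in>highs. exc v - 1 = 0"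
    using sum_nonneg_eq_0_iff[OF finite_classes(3) nonneg] zero by simp
  then show ?thesis using assms(2) by (simp add: exc_def)
qed

lemma high_part_nonneg: "high_part \<ge> 0"
  unfolding high_part_def by (intro sum_nonneg) auto

lemma high_part_zero: "(\<And>v. v \<in> highs \<Longrightarrow> d v = 3) \<Longrightarrow> high_part = 0"
  unfolding high_part_def by simp

text \<open>A degree-2 vertex differs by the excess from
  each high vertex and by 1 from each leaf; a leaf differs by excess + 1 from each high
  vertex and by 1 from each degree-2 vertex.\<close>
lemma row_sum_two:
  assumes "x \<in> twos"
  shows "(\<Sum>y\<in>V. \<bar>real (d x) - real (d y)\<bar>) = 2 + 2 * real nl"
proof -
  have "(\<Sum>y\<in>highs. \<bar>real (d x) - real (d y)\<bar>) = (\<Sum>y\<in>highs. exc y)"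
    using assms by (intro sum.cong) (auto simp: twos_def highs_def exc_def)
  moreover have "(\<Sum>y\<in>twos. \<bar>real (d x) - real (d y)\<bar>) = 0"
    using assms by (simp add: twos_def)
  moreover have "(\<Sum>y\<in>leaves. \<bar>real (d x) - real (d y)\<bar>) = real nl"
    using assms by (simp add: twos_def leaves_def nl_def)
  ultimately show ?thesis
    using sum_classes[of "\<lambda>y. \<bar>real (d x) - real (d y)\<bar>"] excess_highs by linarith
qed

lemma row_sum_leaf:
  assumes "x \<in> leaves"
  shows "(\<Sum>y\<in>V. \<bar>real (d x) - real (d y)\<bar>) = 2 + real nl + real nh + real n2"
proof -
  have "(\<Sum>y\<in>highs. \<bar>real (d x) - real (d y)\<bar>) = (\<Sum>y\<in>highs. exc y + 1)"
    using assms by (intro sum.cong) (auto simp: leaves_def highs_def exc_def)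
  also have "\<dots> = 2 + real nl + real nh"
    using excess_highs by (simp add: sum.distrib nh_def)
  finally have "(\<Sum>y\<in>highs. \<bar>real (d x) - real (d y)\<bar>) = 2 + real nl + real nh" .
  moreover have "(\<Sum>y\<in>twos. \<bar>real (d x) - real (d y)\<bar>) = real n2"
    using assms by (simp add: twos_def leaves_def n2_def)
  moreover have "(\<Sum>y\<in>leaves. \<bar>real (d x) - real (d y)\<bar>) = 0"
    using assms by (simp add: leaves_def)
  ultimately show ?thesis using sum_classes[of "\<lambda>y. \<bar>real (d x) - real (d y)\<bar>"] by linarith
qed

lemma row_sum_high:
  assumes "x \<in> highs"
  shows "(\<Sum>y\<in>V. \<bar>real (d x) - real (d y)\<bar>)
           = (\<Sum>y\<in>highs. \<bar>real (d x) - real (d y)\<bar>) + real n2 * exc x + real nl * (exc x + 1)"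
proof -
  have "(\<Sum>y\<in>twos. \<bar>real (d x) - real (d y)\<bar>) = real n2 * exc x"
    using assms by (simp add: twos_def highs_def exc_def n2_def)
  moreover have "(\<Sum>y\<in>leaves. \<bar>real (d x) - real (d y)\<bar>) = real nl * (exc x + 1)"
    using assms by (simp add: leaves_def highs_def exc_def nl_def)
  ultimately show ?thesis using sum_classes[of "\<lambda>y. \<bar>real (d x) - real (d y)\<bar>"] by linarith
qed

lemma irr_sum_formula:
  "irr_sum = high_part + 4 * real n2 * (1 + real nl) + 2 * real nl * (2 + real nl + real nh)"
proof -
  let ?row = "\<lambda>x. \<Sum>y\<in>V. \<bar>real (d x) - real (d y)\<bar>"
  have "(\<Sum>x\<in>highs. ?row x)
          = high_part + real n2 * (\<Sum>x\<in>highs. exc x) + real nl * ((\<Sum>x\<in>highs. exc x) + real nh)"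
    by (simp add: row_sum_high high_part_def sum.distrib sum_distrib_left distrib_left nh_def)
  moreover have "(\<Sum>x\<in>twos. ?row x) = real n2 * (2 + 2 * real nl)"
    by (simp add: row_sum_two n2_def)
  moreover have "(\<Sum>x\<in>leaves. ?row x) = real nl * (2 + real nl + real nh + real n2)"
    by (simp add: row_sum_leaf nl_def)
  ultimately show ?thesis
    unfolding irr_sum_def sum_classes[of ?row] excess_highs by (simp add: algebra_simps)
qed


lemma degrees_highs_3:
  assumes highs3: "\<And>v. v \<in> highs \<Longrightarrow> d v = 3"
  shows "degrees = mset (replicate nh 3 @ replicate n2 2 @ replicate nl 1)"
proof (rule multiset_eqI)
  fix k
  have range: "d v \<in> {1, 2, 3}" if "v \<in> V" for v
    using deg_pos[OF that] highs3[of v] that by (force simp: highs_def)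
  have "{v\<in>V. d v = 3} = highs" using highs3 by (auto simp: highs_def)
  then have "{v\<in>V. d v = k} = (if k = 3 then highs else if k = 2 then twos
                                  else if k = 1 then leaves else {})"
    using range by (auto simp: twos_def leaves_def)
  then show "count degrees k = count (mset (replicate nh 3 @ replicate n2 2 @ replicate nl 1)) k"
    by (simp add: count_degrees nh_def n2_def nl_def)
qed

text \<open>Without leaves, the extremal sequence (3,3,2,...,2) is forced: h <= 2, h = 0 is
  impossible since the high vertices carry excess 2, and h = 1 would be the excluded
  sequence (4,2,...,2).\<close>
lemma no_leaves_case:
  assumes nl0: "nl = 0" and not_4_2: "\<not> (\<exists>v\<in>V. d v = 4 \<and> (\<forall>w\<in>V-{v}. d w = 2))"
  shows "degrees = mset ([3, 3] @ replicate (card V - 2) 2)"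
    and "irr_sum = 4 * real (card V) - 8"
proof -
  have no_leaf: "leaves = {}" using nl0 finite_classes(1) by (simp add: nl_def)
  have "nh \<noteq> 0"
  proof
    assume "nh = 0"
    then have "highs = {}" using finite_classes(3) by (simp add: nh_def)
    then show False using excess_highs by simp
  qed
  moreover have "nh \<noteq> 1"
  proof
    assume "nh = 1"
    then obtain v where v: "highs = {v}" by (auto simp: nh_def card_Suc_eq)
    then have "d v = 4" "v \<in> V" using excess_highs nl0 by (auto simp: exc_def highs_def)
    moreover have "d w = 2" if w: "w \<in> V - {v}" for w
    proof -
      have "w \<notin> highs" "w \<notin> leaves" using w v no_leaf by auto
      then show ?thesis using w deg_pos[of w] by (auto simp: highs_def leaves_def)
    qed
    ultimately show False using not_4_2 by blast
  qed
  ultimately have nh2: "nh = 2" using nh_le nl0 by linarith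
  then have highs3: "\<And>v. v \<in> highs \<Longrightarrow> d v = 3" using highs_deg_3 nl0 by simp
  have n2: "n2 = card V - 2" using card_V nl0 nh2 by simp
  show "degrees = mset ([3, 3] @ replicate (card V - 2) 2)"
    using degrees_highs_3[OF highs3] nh2 nl0 n2 by (simp add: numeral_2_eq_2)
  show "irr_sum = 4 * real (card V) - 8"
    using irr_sum_formula high_part_zero[OF highs3] card_V nl0 nh2 by simp
qed


lemma one_leaf_case:
  assumes "nl = 1" and "nh = 3"
  shows "degrees = mset ([3, 3, 3] @ replicate (card V - 4) 2 @ [1])"
    and "irr_sum = 8 * real (card V) - 20"
proof -
  have highs3: "\<And>v. v \<in> highs \<Longrightarrow> d v = 3" using highs_deg_3 assms by simp
  have n2: "n2 = card V - 4" using card_V assms by simp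
  show "degrees = mset ([3, 3, 3] @ replicate (card V - 4) 2 @ [1])"
    using degrees_highs_3[OF highs3] assms n2 by (simp add: numeral_3_eq_3)
  show "irr_sum = 8 * real (card V) - 20"
    using irr_sum_formula high_part_zero[OF highs3] card_V assms by simp
qed

lemma many_leaves_case:
  assumes "nl \<ge> 1" and "\<not> (nl = 1 \<and> nh = 3)"
  shows "irr_sum > 8 * real (card V) - 20"
proof -
  have "real (8 * (nl + nh + n2)) < real (4 * n2 * (1 + nl) + 2 * nl * (2 + nl + nh) + 20)"
    using key_inequality[OF assms(1) nh_le assms(2)] by (simp only: of_nat_less_iff)
  then have "8 * (real nl + real nh + real n2)
               < 4 * real n2 * (1 + real nl) + 2 * real nl * (2 + real nl + real nh) + 20"
    by (simp only: of_nat_add of_nat_mult of_nat_numeral of_nat_1)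
  moreover have "real (card V) = real nl + real nh + real n2" using card_V by simp
  ultimately show ?thesis using irr_sum_formula high_part_nonneg by (smt (verit))
qed

lemma irr_sum_trichotomy:
  assumes not_4_2: "\<not> (\<exists>v\<in>V. d v = 4 \<and> (\<forall>w\<in>V-{v}. d w = 2))"
  defines "seq1 \<equiv> mset ([3, 3] @ replicate (card V - 2) 2)"
    and "seq2 \<equiv> mset ([3, 3, 3] @ replicate (card V - 4) 2 @ [1])"
  shows "(degrees = seq1 \<and> irr_sum = 4 * real (card V) - 8) \<or>
         (degrees \<noteq> seq1 \<and> degrees = seq2 \<and> irr_sum = 8 * real (card V) - 20) \<or>
         (degrees \<noteq> seq1 \<and> degrees \<noteq> seq2 \<and> irr_sum > 8 * real (card V) - 20)"
proof (cases "nl = 0")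
  case True
  then show ?thesis using no_leaves_case[OF True not_4_2] by (simp add: seq1_def)
next
  case False
  then have not_seq1: "degrees \<noteq> seq1"
    using count_degrees_1 by (auto simp: seq1_def)
  show ?thesis
  proof (cases "nl = 1 \<and> nh = 3")
    case True
    then show ?thesis using one_leaf_case not_seq1 by (simp add: seq2_def)
  next
    case not_13: False
    have "degrees \<noteq> seq2"
    proof
      assume deg2: "degrees = seq2"
      then have "nl = 1" "n2 = card V - 4" "card V \<ge> 4"
        using count_degrees_1 count_degrees_2 size_degrees by (auto simp: seq2_def)
      then show False using card_V not_13 by linarith
    qed
    then show ?thesis using many_leaves_case False not_13 not_seq1 by simp
  qed
qed

end

lemma bicyclic_degrees_deg:
  assumes "bicyclic V E" and "card V \<ge> 2"
  shows "bicyclic_degrees V (deg E)"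
proof
  have sg: "simple_graph V E" and con: "connected_graph V E" and cE: "card E = card V + 1"
    using assms(1) by (auto simp: bicyclic_def)
  show "finite V" using sg by (simp add: simple_graph_def)
  show "\<And>v. v \<in> V \<Longrightarrow> deg E v \<ge> 1" using connected_deg_pos[OF sg con assms(2)] .
  show "(\<Sum>v\<in>V. deg E v) = 2 * card V + 2" using handshake[OF sg] cE by simp
qed

theorem theorem13:
  fixes V :: "'a set" and E :: "'a set set" and n :: nat
  assumes "n \<ge> 7" and "in_Bpp n V E"
  shows "irr_t V E \<ge> 2 * real n - 4 \<and>
         (irr_t V E = 2 * real n - 4 \<longleftrightarrow> degree_sequence V E = [3, 3] @ replicate (n - 2) 2) \<and>
         (degree_sequence V E \<noteq> [3, 3] @ replicate (n - 2) 2 \<longrightarrow>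
            irr_t V E \<ge> 4 * real n - 10 \<and>
            (irr_t V E = 4 * real n - 10 \<longleftrightarrow>
             degree_sequence V E = [3, 3, 3] @ replicate (n - 4) 2 @ [1]))"
proof -
  have card: "card V = n" and "bicyclic V E" using assms(2) by (auto simp: in_Bpp_def)
  then interpret bicyclic_degrees V "deg E"
    using assms(1) by (intro bicyclic_degrees_deg) auto
  have not_4_2: "\<not> (\<exists>v\<in>V. deg E v = 4 \<and> (\<forall>w\<in>V-{v}. deg E w = 2))"
    using Bpp_not_4_2[OF assms(2)] by blast
  have irr: "irr_t V E = irr_sum / 2" by (simp add: irr_t_def irr_sum_def)
  have seq_iff: "degree_sequence V E = xs \<longleftrightarrow> degrees = mset xs" if "sorted (rev xs)" for xs
    unfolding degree_sequence_def degrees_def using that by (rule rev_sorted_list_of_multiset_eq_iff)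
  have seq1: "degree_sequence V E = [3, 3] @ replicate (n - 2) 2
               \<longleftrightarrow> degrees = mset ([3, 3] @ replicate (n - 2) 2)"
    and seq2: "degree_sequence V E = [3, 3, 3] @ replicate (n - 4) 2 @ [1]
               \<longleftrightarrow> degrees = mset ([3, 3, 3] @ replicate (n - 4) 2 @ [1])"
    by (rule seq_iff, simp add: sorted_append)+
  show ?thesis
    using irr_sum_trichotomy[OF not_4_2, unfolded card] assms(1) unfolding irr seq1 seq2 by auto
qed

end
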